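(* The group $\mathscr G^{\mathrm{1cas}}_{\rho}$ contains elements with stationary, hence uncountable, row-support, and therefore elements with uncountable total support. Consequently, via any coordinate relabeling of the forcing, the cascade system $(\mathbb P_1,\mathscr G^{\mathrm{1cas}}_\rho,\mathscr F^{\mathrm{1cas}}_\rho)$ is not conjugate to any symmetric system on $\mathbb P_1$ whose automorphism group consists entirely of elements with countable total support.
   Context: Over a ground model $V$ of ZFC, $\mathbb P_0$ is the forcing of finite partial regressive functions on $\omega_1$; for $V$-generic $G_0$, $\rho:\omega_1\setminus\{0\}\to\omega_1$ is the induced total regressive map, $\operatorname{Succ}_\rho(\xi)=\{\eta:\rho(\eta)=\xi\}$, $\operatorname{cl}_\rho(A)$ the least $\rho$-closed superset of $A$. In $V[G_0]$, $\mathbb P_1=\operatorname{Fn}(\omega_1\times\omega\times\omega,2,{<}\omega)$. For $\xi<\omega_1$, $i<\omega$, $s\subseteq\omega$ finite or cofinite, $\tau^{\mathrm{1cas}}_{\xi,i,s}$ is the automorphism of $\mathbb P_1$ flipping the value of a condition at each coordinate $(\zeta,i,n)$ with $n\in s$ and $\zeta\in\{\xi\}\cup\operatorname{Succ}_\rho(\xi)$. $\mathscr G^{\mathrm{1cas}}_\rho$ is the group generated by them; $\operatorname{Fix}^{\mathrm{1cas}}_\rho(A)$ is the subgroup acting trivially on coordinates $(\zeta,j,n)$ with $\zeta\in\operatorname{cl}_\rho(A)$; $\mathscr F^{\mathrm{1cas}}_\rho$ is the filter generated by these for countable $A$. The total support of an automorphism is the set of coordinates $(\eta,j,n)$ on which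 it acts nontrivially; its row-support is the set of $\eta<\omega_1$ such that it acts nontrivially on some coordinate $(\eta,j,n)$. A coordinate relabeling is a bijection of $\omega_1\times\omega\times\omega$, inducing an automorphism of $\mathbb P_1$ by which groups of automorphisms are conjugated. *)

theory Defs
  imports Main "HOL-Library.Countable_Set"
begin

text \<open>omega_1 is modelled by a well-ordered type 'a which is uncountable and all of
whose proper initial segments are countable (this characterises omega_1 up to
isomorphism).\<close>

definition is_omega1_type :: "'a::wellorder itself \<Rightarrow> bool" where
  "is_omega1_type _ \<longleftrightarrow> \<not> countable (UNIV :: 'a set) \<and> (\<forall>\<alpha>::'a. countable {\<beta>. \<beta> < \<alpha>})"

definition ozero :: "'a::wellorder" where
  "ozero = (LEAST x. True)"

definition unbounded_set :: "'a::wellorder set \<Rightarrow> bool" where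
  "unbounded_set C \<longleftrightarrow> (\<forall>\<beta>. \<exists>\<gamma>\<in>C. \<beta> < \<gamma>)"

definition closed_set :: "'a::wellorder set \<Rightarrow> bool" where
  "closed_set C \<longleftrightarrow> (\<forall>\<alpha>. ((\<exists>\<beta>. \<beta> < \<alpha>) \<and> (\<forall>\<beta><\<alpha>. \<exists>\<gamma>\<in>C. \<beta> < \<gamma> \<and> \<gamma> < \<alpha>)) \<longrightarrow> \<alpha> \<in> C)"

definition club :: "'a::wellorder set \<Rightarrow> bool" where
  "club C \<longleftrightarrow> closed_set C \<and> unbounded_set C"

definition stationary :: "'a::wellorder set \<Rightarrow> bool" where
  "stationary S \<longleftrightarrow> (\<forall>C. club C \<longrightarrow> S \<inter> C \<noteq> {})"

definition regressive :: "('a::wellorder \<Rightarrow> 'a) \<Rightarrow> bool" where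
  "regressive \<rho> \<longleftrightarrow> (\<forall>\<eta>. \<eta> \<noteq> ozero \<longrightarrow> \<rho> \<eta> < \<eta>)"

definition Succ :: "('a::wellorder \<Rightarrow> 'a) \<Rightarrow> 'a \<Rightarrow> 'a set" where
  "Succ \<rho> \<xi> = {\<eta>. \<eta> \<noteq> ozero \<and> \<rho> \<eta> = \<xi>}"

inductive_set clrho :: "('a::wellorder \<Rightarrow> 'a) \<Rightarrow> 'a set \<Rightarrow> 'a set" for \<rho> A where
  base: "x \<in> A \<Longrightarrow> x \<in> clrho \<rho> A"
| step: "x \<in> clrho \<rho> A \<Longrightarrow> x \<noteq> ozero \<Longrightarrow> \<rho> x \<in> clrho \<rho> A"

text \<open>Conditions of P1 = Fn(omega_1 \<times> omega \<times> omega, 2, <omega): finite partial functions.\<close>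
type_synonym 'a coord = "'a \<times> nat \<times> nat"
type_synonym 'a cond = "'a coord \<rightharpoonup> bool"

definition P1 :: "'a cond set" where
  "P1 = {p. finite (dom p)}"

text \<open>q extends p (q is stronger than p).\<close>
definition ext_le :: "'a cond \<Rightarrow> 'a cond \<Rightarrow> bool" where
  "ext_le q p \<longleftrightarrow> p \<subseteq>\<^sub>m q"

definition is_automorphism :: "('a cond \<Rightarrow> 'a cond) \<Rightarrow> bool" where
  "is_automorphism e \<longleftrightarrow> bij_betw e P1 P1 \<and>
     (\<forall>p\<in>P1. \<forall>q\<in>P1. ext_le (e q) (e p) \<longleftrightarrow> ext_le q p)"

definition flip :: "'a coord set \<Rightarrow> 'a cond \<Rightarrow> 'a cond" where
  "flip X p = (\<lambda>c. map_option (\<lambda>b. if c \<in> X then \<not> b else b) (p c))"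

definition tau1cas :: "('a::wellorder \<Rightarrow> 'a) \<Rightarrow> 'a \<Rightarrow> nat \<Rightarrow> nat set \<Rightarrow> 'a cond \<Rightarrow> 'a cond" where
  "tau1cas \<rho> \<xi> i s = flip (({\<xi>} \<union> Succ \<rho> \<xi>) \<times> {i} \<times> s)"

definition gens1cas :: "('a::wellorder \<Rightarrow> 'a) \<Rightarrow> ('a cond \<Rightarrow> 'a cond) set" where
  "gens1cas \<rho> = {tau1cas \<rho> \<xi> i s | \<xi> i s. finite s \<or> finite (- s)}"

inductive_set G1cas :: "('a::wellorder \<Rightarrow> 'a) \<Rightarrow> ('a cond \<Rightarrow> 'a cond) set" for \<rho> where
  gen: "g \<in> gens1cas \<rho> \<Longrightarrow> g \<in> G1cas \<rho>"
| ident: "id \<in> G1cas \<rho>"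
| comp: "g \<in> G1cas \<rho> \<Longrightarrow> h \<in> G1cas \<rho> \<Longrightarrow> g \<circ> h \<in> G1cas \<rho>"
| inverse: "g \<in> G1cas \<rho> \<Longrightarrow> inv_into P1 g \<in> G1cas \<rho>"

definition tsupp :: "('a cond \<Rightarrow> 'a cond) \<Rightarrow> 'a coord set" where
  "tsupp e = {c. \<exists>p\<in>P1. e p c \<noteq> p c}"

definition row_supp :: "('a cond \<Rightarrow> 'a cond) \<Rightarrow> 'a set" where
  "row_supp e = fst ` tsupp e"

definition Fix1cas :: "('a::wellorder \<Rightarrow> 'a) \<Rightarrow> 'a set \<Rightarrow> ('a cond \<Rightarrow> 'a cond) set" where
  "Fix1cas \<rho> A = {g \<in> G1cas \<rho>. \<forall>\<zeta>\<in>clrho \<rho> A. \<forall>j n. (\<zeta>, j, n) \<notin> tsupp g}"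

definition is_subgroup :: "('a cond \<Rightarrow> 'a cond) set \<Rightarrow> ('a cond \<Rightarrow> 'a cond) set \<Rightarrow> bool" where
  "is_subgroup K H \<longleftrightarrow> K \<subseteq> H \<and> id \<in> K \<and> (\<forall>g\<in>K. \<forall>h\<in>K. g \<circ> h \<in> K)
     \<and> (\<forall>g\<in>K. inv_into P1 g \<in> K)"

definition F1cas :: "('a::wellorder \<Rightarrow> 'a) \<Rightarrow> ('a cond \<Rightarrow> 'a cond) set set" where
  "F1cas \<rho> = {K. is_subgroup K (G1cas \<rho>) \<and> (\<exists>A. countable A \<and> Fix1cas \<rho> A \<subseteq> K)}"

text \<open>Symmetric systems on P1: a group of automorphisms with a normal filter of subgroups.\<close>
definition symmetric_system :: "('a cond \<Rightarrow> 'a cond) set \<Rightarrow> ('a cond \<Rightarrow> 'a cond) set set \<Rightarrow> bool" where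
  "symmetric_system H F \<longleftrightarrow>
     (\<forall>h\<in>H. is_automorphism h) \<and> is_subgroup H H \<and>
     H \<in> F \<and> (\<forall>K\<in>F. is_subgroup K H) \<and>
     (\<forall>K\<in>F. \<forall>L. is_subgroup L H \<and> K \<subseteq> L \<longrightarrow> L \<in> F) \<and>
     (\<forall>K\<in>F. \<forall>L\<in>F. K \<inter> L \<in> F) \<and>
     (\<forall>K\<in>F. \<forall>h\<in>H. {h \<circ> k \<circ> inv_into P1 h | k. k \<in> K} \<in> F)"

definition relabel :: "('a coord \<Rightarrow> 'a coord) \<Rightarrow> 'a cond \<Rightarrow> 'a cond" where
  "relabel \<pi> p = p \<circ> inv \<pi>"

definition conj_group :: "('a coord \<Rightarrow> 'a coord) \<Rightarrow> ('a cond \<Rightarrow> 'a cond) set \<Rightarrow> ('a cond \<Rightarrow> 'a cond) set" where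
  "conj_group \<pi> G = {relabel \<pi> \<circ> g \<circ> relabel (inv \<pi>) | g. g \<in> G}"

definition conj_filter :: "('a coord \<Rightarrow> 'a coord) \<Rightarrow> ('a cond \<Rightarrow> 'a cond) set set \<Rightarrow> ('a cond \<Rightarrow> 'a cond) set set" where
  "conj_filter \<pi> F = conj_group \<pi> ` F"

end

theory Submission
  imports Defs
begin

text \<open>
  By Fodor's lemma the regressive map \<rho> is constant, with value some \<xi>, on a stationary set,
  i.e. Succ \<rho> \<xi> is stationary. The generator flipping the coordinates (\<zeta>, 0, 0) for
  \<zeta> \<in> {\<xi>} \<union> Succ \<rho> \<xi> has exactly this set as row support, which is stationary and hence
  uncountable. Conjugating by a coordinate relabeling \<pi> transports total supports along \<pi>,
  so the conjugated group still contains an element of uncountable total support.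
\<close>

lemma countable_omega1_bounded:
  assumes "is_omega1_type TYPE('a::wellorder)" and "countable (S :: 'a set)"
  shows "\<exists>b. \<forall>s\<in>S. s < b"
proof (rule ccontr)
  assume "\<not> ?thesis"
  then have "UNIV \<subseteq> S \<union> (\<Union>s\<in>S. {\<beta>. \<beta> < s})"
    by (auto simp: not_less order.order_iff_strict)
  moreover have "countable (S \<union> (\<Union>s\<in>S. {\<beta>. \<beta> < s}))"
    using assms unfolding is_omega1_type_def by auto
  ultimately show False
    using assms(1) countable_subset unfolding is_omega1_type_def by blast
qed

lemma omega1_above:
  assumes "is_omega1_type TYPE('a::wellorder)"
  shows "\<exists>\<gamma>. (\<beta>::'a) < \<gamma>"
  using countable_omega1_bounded[OF assms, of "{\<beta>}"] by auto

lemma stationary_imp_uncountable: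
  assumes om: "is_omega1_type TYPE('a::wellorder)" and "stationary (S :: 'a set)"
  shows "uncountable S"
proof
  assume "countable S"
  obtain b where b: "\<forall>s\<in>S. s < b"
    using countable_omega1_bounded[OF om \<open>countable S\<close>] by blast
  have "unbounded_set {\<gamma>. b < \<gamma>}"
  proof (unfold unbounded_set_def, intro allI)
    fix \<beta>
    obtain \<gamma> where "max \<beta> b < \<gamma>"
      using omega1_above[OF om] by blast
    then show "\<exists>\<gamma>\<in>{\<gamma>. b < \<gamma>}. \<beta> < \<gamma>"
      by auto
  qed
  moreover have "closed_set {\<gamma>. b < \<gamma>}"
    unfolding closed_set_def by (auto dest: less_trans)
  ultimately have "S \<inter> {\<gamma>. b < \<gamma>} \<noteq> {}"
    using \<open>stationary S\<close> unfolding stationary_def club_def by blast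
  then show False
    using b by auto
qed

lemma stationary_mono: "stationary S \<Longrightarrow> S \<subseteq> T \<Longrightarrow> stationary T"
  unfolding stationary_def by blast

lemma strict_mono_omega1_sup:
  assumes om: "is_omega1_type TYPE('a::wellorder)" and "strict_mono (f :: nat \<Rightarrow> 'a)"
  shows "\<exists>\<alpha>. (\<forall>n. f n < \<alpha>) \<and> (\<forall>x<\<alpha>. \<exists>n. x < f n)"
proof -
  define \<alpha> where "\<alpha> = (LEAST x. \<forall>n. f n < x)"
  obtain b where "\<forall>n. f n < b"
    using countable_omega1_bounded[OF om, of "range f"] by auto
  then have "\<forall>n. f n < \<alpha>"
    unfolding \<alpha>_def by (rule LeastI)
  moreover have "\<exists>n. x < f n" if "x < \<alpha>" for x
  proof -
    have "\<not> (\<forall>n. f n < x)"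
      using that unfolding \<alpha>_def by (rule not_less_Least)
    then obtain n where "x \<le> f n"
      by (auto simp: not_less)
    then show ?thesis
      using \<open>strict_mono f\<close> by (meson lessI order_le_less_trans strict_monoD)
  qed
  ultimately show ?thesis
    by blast
qed

lemma countable_clubs_meet_interval:
  assumes om: "is_omega1_type TYPE('a::wellorder)"
    and "countable I" and C: "\<And>\<xi>. \<xi> \<in> I \<Longrightarrow> club (C \<xi> :: 'a set)"
  shows "\<exists>\<beta>'. \<beta> < \<beta>' \<and> (\<forall>\<xi>\<in>I. \<exists>\<gamma>\<in>C \<xi>. \<beta> < \<gamma> \<and> \<gamma> < \<beta>')"
proof -
  have "\<forall>\<xi>\<in>I. \<exists>\<gamma>. \<gamma> \<in> C \<xi> \<and> \<beta> < \<gamma>"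
    using C unfolding club_def unbounded_set_def by blast
  then obtain g where g: "\<forall>\<xi>\<in>I. g \<xi> \<in> C \<xi> \<and> \<beta> < g \<xi>"
    by (rule bchoice[THEN exE])
  obtain b where "\<forall>s\<in>insert \<beta> (g ` I). s < b"
    using countable_omega1_bounded[OF om, of "insert \<beta> (g ` I)"] \<open>countable I\<close> by auto
  then have "\<beta> < b \<and> (\<forall>\<xi>\<in>I. g \<xi> \<in> C \<xi> \<and> \<beta> < g \<xi> \<and> g \<xi> < b)"
    using g by simp
  then show ?thesis
    by blast
qed

lemma countable_atMost_omega1:
  assumes "is_omega1_type TYPE('a::wellorder)"
  shows "countable {..\<beta>::'a}"
proof -
  have "{..\<beta>} = insert \<beta> {\<xi>. \<xi> < \<beta>}"
    by auto
  then show ?thesis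
    using assms unfolding is_omega1_type_def by simp
qed

text \<open>
  The point \<alpha> is the supremum of an \<omega>-sequence whose consecutive terms enclose a point of
  every club C \<xi> with \<xi> below the earlier term.
\<close>
lemma diagonal_intersection_clubs_nonempty:
  assumes om: "is_omega1_type TYPE('a::wellorder)" and C: "\<And>\<xi>::'a. club (C \<xi>)"
  shows "\<exists>\<alpha>. \<alpha> \<noteq> ozero \<and> (\<forall>\<xi><\<alpha>. \<alpha> \<in> C \<xi>)"
proof -
  have "\<exists>\<beta>'. \<beta> < \<beta>' \<and> (\<forall>\<xi>\<in>{..\<beta>}. \<exists>\<gamma>\<in>C \<xi>. \<beta> < \<gamma> \<and> \<gamma> < \<beta>')" for \<beta>
    by (rule countable_clubs_meet_interval[OF om countable_atMost_omega1[OF om]]) (rule C)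
  then obtain nxt
    where nxt: "\<And>\<beta>. \<beta> < nxt \<beta> \<and> (\<forall>\<xi>\<in>{..\<beta>}. \<exists>\<gamma>\<in>C \<xi>. \<beta> < \<gamma> \<and> \<gamma> < nxt \<beta>)"
    by metis
  define f where "f n = (nxt ^^ n) ozero" for n
  have f_Suc: "f (Suc n) = nxt (f n)" for n
    unfolding f_def by simp
  have "strict_mono f"
    unfolding strict_mono_Suc_iff by (simp add: f_Suc nxt)
  then obtain \<alpha> where above: "\<forall>n. f n < \<alpha>" and below: "\<forall>x<\<alpha>. \<exists>n. x < f n"
    using strict_mono_omega1_sup[OF om] by blast
  have "\<alpha> \<in> C \<xi>" if "\<xi> < \<alpha>" for \<xi>
  proof -
    obtain m where m: "\<xi> < f m"
      using below \<open>\<xi> < \<alpha>\<close> by blast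
    have "\<exists>\<gamma>\<in>C \<xi>. \<beta> < \<gamma> \<and> \<gamma> < \<alpha>" if "\<beta> < \<alpha>" for \<beta>
    proof -
      obtain n where n: "\<beta> < f n"
        using below \<open>\<beta> < \<alpha>\<close> by blast
      define k where "k = max n m"
      have "f n \<le> f k" "f m \<le> f k"
        using \<open>strict_mono f\<close> by (simp_all add: strict_mono_less_eq k_def)
      then have "\<beta> < f k" "\<xi> \<le> f k"
        using n m by simp_all
      then obtain \<gamma> where "\<gamma> \<in> C \<xi>" "f k < \<gamma>" "\<gamma> < f (Suc k)"
        using nxt[of "f k"] f_Suc by auto
      then show ?thesis
        using \<open>\<beta> < f k\<close> above by (meson less_trans)
    qed
    then show ?thesis
      using C \<open>\<xi> < \<alpha>\<close> unfolding club_def closed_set_def by blast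
  qed
  moreover have "f 0 = ozero"
    unfolding f_def by simp
  then have "\<alpha> \<noteq> ozero"
    using above by (metis less_irrefl)
  ultimately show ?thesis
    by blast
qed

lemma fodor_stationary_fibre:
  assumes om: "is_omega1_type TYPE('a::wellorder)" and "regressive (\<rho> :: 'a \<Rightarrow> 'a)"
  shows "\<exists>\<xi>. stationary (Succ \<rho> \<xi>)"
proof (rule ccontr)
  assume "\<not> ?thesis"
  then obtain C where C: "\<And>\<xi>. club (C \<xi>)" "\<And>\<xi>. Succ \<rho> \<xi> \<inter> C \<xi> = {}"
    unfolding stationary_def by metis
  obtain \<alpha> where "\<alpha> \<noteq> ozero" "\<forall>\<xi><\<alpha>. \<alpha> \<in> C \<xi>"
    using diagonal_intersection_clubs_nonempty[of C, OF om C(1)] by blast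
  moreover have "\<rho> \<alpha> < \<alpha>"
    using \<open>regressive \<rho>\<close> \<open>\<alpha> \<noteq> ozero\<close> unfolding regressive_def by blast
  ultimately have "\<alpha> \<in> Succ \<rho> (\<rho> \<alpha>) \<inter> C (\<rho> \<alpha>)"
    unfolding Succ_def by blast
  then show False
    using C(2) by blast
qed

lemma flip_apply_notin: "c \<notin> X \<Longrightarrow> flip X p c = p c"
  by (simp add: flip_def option.map_ident)

lemma tsupp_flip: "tsupp (flip X) = X"
proof
  show "tsupp (flip X) \<subseteq> X"
    unfolding tsupp_def using flip_apply_notin by blast
  show "X \<subseteq> tsupp (flip X)"
  proof
    fix c assume "c \<in> X"
    then have "flip X [c \<mapsto> True] c \<noteq> [c \<mapsto> True] c"
      unfolding flip_def by simp
    moreover have "[c \<mapsto> True] \<in> P1"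
      unfolding P1_def by simp
    ultimately show "c \<in> tsupp (flip X)"
      unfolding tsupp_def by blast
  qed
qed

lemma tau1cas_in_G1cas: "finite s \<or> finite (- s) \<Longrightarrow> tau1cas \<rho> \<xi> i s \<in> G1cas \<rho>"
  by (rule G1cas.gen) (auto simp: gens1cas_def)

lemma row_supp_tau1cas: "s \<noteq> {} \<Longrightarrow> row_supp (tau1cas \<rho> \<xi> i s) = {\<xi>} \<union> Succ \<rho> \<xi>"
  unfolding row_supp_def tau1cas_def tsupp_flip by auto

lemma relabel_in_P1:
  assumes "bij \<pi>" and "p \<in> P1"
  shows "relabel \<pi> p \<in> P1"
proof -
  have "dom (relabel \<pi> p) = inv \<pi> -` dom p"
    unfolding relabel_def by auto
  moreover have "inj (inv \<pi>)"
    using assms(1) by (simp add: bij_imp_bij_inv bij_is_inj)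
  ultimately show ?thesis
    using assms(2) unfolding P1_def by (simp add: finite_vimageI)
qed

lemma relabel_image_P1:
  assumes "bij \<pi>"
  shows "relabel \<pi> ` P1 = P1"
proof
  show "relabel \<pi> ` P1 \<subseteq> P1"
    using assms relabel_in_P1 by blast
  have "\<pi> \<circ> inv \<pi> = id"
    using assms by (metis bij_is_surj surj_iff)
  then have "relabel \<pi> (relabel (inv \<pi>) p) = p" for p
    using assms unfolding relabel_def by (simp add: inv_inv_eq comp_assoc)
  then show "P1 \<subseteq> relabel \<pi> ` P1"
    using assms relabel_in_P1[of "inv \<pi>"] by (metis bij_imp_bij_inv image_eqI subsetI)
qed

lemma tsupp_conj_relabel:
  assumes "bij \<pi>"
  shows "tsupp (relabel \<pi> \<circ> e \<circ> relabel (inv \<pi>)) = \<pi> ` tsupp e"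
proof -
  let ?e' = "relabel \<pi> \<circ> e \<circ> relabel (inv \<pi>)"
  have relabel_at: "relabel (inv \<pi>) p (inv \<pi> c) = p c" for p c
    using assms unfolding relabel_def by (simp add: inv_inv_eq bij_is_surj surj_f_inv_f)
  have "inv \<pi> c \<in> tsupp e \<longleftrightarrow> c \<in> tsupp ?e'" for c
  proof -
    have "inv \<pi> c \<in> tsupp e \<longleftrightarrow> (\<exists>q\<in>relabel (inv \<pi>) ` P1. e q (inv \<pi> c) \<noteq> q (inv \<pi> c))"
      using assms by (simp add: tsupp_def relabel_image_P1 bij_imp_bij_inv)
    also have "\<dots> \<longleftrightarrow> (\<exists>p\<in>P1. e (relabel (inv \<pi>) p) (inv \<pi> c) \<noteq> p c)"
      by (simp add: relabel_at)
    also have "\<dots> \<longleftrightarrow> c \<in> tsupp ?e'"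
      by (simp add: tsupp_def relabel_def[of \<pi>])
    finally show ?thesis .
  qed
  then have "tsupp ?e' = inv \<pi> -` tsupp e"
    by blast
  also have "\<dots> = \<pi> ` tsupp e"
    using assms by (simp add: bij_vimage_eq_inv_image bij_imp_bij_inv inv_inv_eq)
  finally show ?thesis .
qed

lemma conj_group_has_uncountable_tsupp:
  assumes "bij \<pi>" and "g \<in> G" and "uncountable (tsupp g)"
  shows "\<exists>h\<in>conj_group \<pi> G. uncountable (tsupp h)"
proof
  show "relabel \<pi> \<circ> g \<circ> relabel (inv \<pi>) \<in> conj_group \<pi> G"
    unfolding conj_group_def using assms(2) by blast
  have "uncountable (\<pi> ` tsupp g)"
    using assms by (meson bij_is_inj countable_image_inj_on inj_on_subset subset_UNIV)
  then show "uncountable (tsupp (relabel \<pi> \<circ> g \<circ> relabel (inv \<pi>)))"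
    by (simp add: tsupp_conj_relabel[OF assms(1)])
qed

theorem proposition2p11:
  fixes \<rho> :: "'a::wellorder \<Rightarrow> 'a"
  assumes "is_omega1_type TYPE('a)"
    and "regressive \<rho>"
  shows "(\<exists>g\<in>G1cas \<rho>. stationary (row_supp g) \<and> \<not> countable (row_supp g))
    \<and> (\<exists>g\<in>G1cas \<rho>. \<not> countable (tsupp g))
    \<and> (\<forall>\<pi>. bij \<pi> \<longrightarrow> \<not> (\<exists>H F. symmetric_system H F \<and> (\<forall>h\<in>H. countable (tsupp h))
             \<and> conj_group \<pi> (G1cas \<rho>) = H \<and> conj_filter \<pi> (F1cas \<rho>) = F))"
proof -
  obtain \<xi> where "stationary (Succ \<rho> \<xi>)"
    using fodor_stationary_fibre assms by blast
  define g where "g = tau1cas \<rho> \<xi> 0 {0}"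
  have "g \<in> G1cas \<rho>"
    unfolding g_def by (simp add: tau1cas_in_G1cas)
  moreover have "stationary (row_supp g)"
    using stationary_mono[OF \<open>stationary (Succ \<rho> \<xi>)\<close> subset_insertI]
    by (simp add: g_def row_supp_tau1cas)
  moreover from this have "uncountable (row_supp g)"
    using stationary_imp_uncountable assms(1) by blast
  moreover from this have "uncountable (tsupp g)"
    unfolding row_supp_def by blast
  moreover from this have "\<exists>h\<in>conj_group \<pi> (G1cas \<rho>). uncountable (tsupp h)" if "bij \<pi>" for \<pi>
    using conj_group_has_uncountable_tsupp that \<open>g \<in> G1cas \<rho>\<close> by blast
  ultimately show ?thesis
    by blast
qed

end
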